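(* Let $\varphi:VB_n\to\mathrm{Aut}(F_n)$ be the homomorphism with $\varphi(\sigma_i)=\sigma_i$ and $\varphi(\rho_i)=\alpha_i$ (as automorphisms below), $i=1,\dots,n-1$. Then $\varphi(VP_n)=Cb_n$ and $\varphi(V_i^* )=D_i$ for $i=1,\dots,n-1$.
   Context: The virtual braid group $VB_n$ has generators $\sigma_1,\dots,\sigma_{n-1},\rho_1,\dots,\rho_{n-1}$ and defining relations: $\sigma_i\sigma_{i+1}\sigma_i=\sigma_{i+1}\sigma_i\sigma_{i+1}$, $\sigma_i\sigma_j=\sigma_j\sigma_i$ ($|i-j|\ge2$); $\rho_i\rho_{i+1}\rho_i=\rho_{i+1}\rho_i\rho_{i+1}$, $\rho_i\rho_j=\rho_j\rho_i$ ($|i-j|\ge2$), $\rho_i^2=1$; $\sigma_i\rho_j=\rho_j\sigma_i$ ($|i-j|\ge2$), $\rho_i\rho_{i+1}\sigma_i=\sigma_{i+1}\rho_i\rho_{i+1}$. $VP_n$ is the kernel of $VB_n\to S_n$, $\sigma_i,\rho_i\mapsto(i,i+1)$. Set $\lambda_{i,i+1}=\rho_i\sigma_i^{-1}$, $\lambda_{i+1,i}=\sigma_i^{-1}\rho_i$, and for $1\le i<j-1\le n-1$: $\lambda_{ij}=\rho_{j-1}\cdots\rho_{i+1}\lambda_{i,i+1}\rho_{i+1}\cdots\rho_{j-1}$, $\lambda_{ji}=\rho_{j-1}\cdots\rho_{i+1}\lambda_{i+1,i}\rho_{i+1}\cdots\rho_{j-1}$. $V_i$ is the subgroup generated by $\lambda_{1,i+1},\dots,\lambda_{i,i+1},\lambda_{i+1,1},\dots,\lambda_{i+1,i}$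 and $V_i^*$ its normal closure in $\langle\lambda_{kl}:k,l\le i+1\rangle$. Let $F_n=\langle x_1,\dots,x_n\rangle$ be free. The automorphism $\sigma_i$ sends $x_i\mapsto x_ix_{i+1}x_i^{-1}$, $x_{i+1}\mapsto x_i$, fixing other $x_l$; $\alpha_i$ swaps $x_i,x_{i+1}$ and fixes the others; $\varepsilon_{ij}$ ($i\ne j$) sends $x_i\mapsto x_j^{-1}x_ix_j$ and fixes $x_l$, $l\ne i$. (These assignments define a homomorphism $\varphi$; its image is the welded braid group $WB_n$, the group of conjugating automorphisms.) $Cb_n=\langle\varepsilon_{ij}:1\le i\ne j\le n\rangle$ and $D_i=\langle\varepsilon_{i+1,1},\dots,\varepsilon_{i+1,i},\varepsilon_{1,i+1},\dots,\varepsilon_{i,i+1}\rangle$. *)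

theory Defs
  imports "HOL-Algebra.Bij" "HOL-Algebra.Generated_Groups"
begin

(* a letter (i, False) is x_i, a letter (i, True) is x_i^{-1} *)
type_synonym fletter = "nat \<times> bool"
type_synonym fword = "fletter list"

fun reduce :: "fword \<Rightarrow> fword" where
  "reduce [] = []"
| "reduce (x # w) =
     (case reduce w of
        [] \<Rightarrow> [x]
      | y # w' \<Rightarrow> (if fst x = fst y \<and> snd x \<noteq> snd y then w' else x # y # w'))"

definition reduced :: "fword \<Rightarrow> bool" where
  "reduced w \<longleftrightarrow> (\<forall>k. Suc k < length w \<longrightarrow>
      \<not> (fst (w ! k) = fst (w ! Suc k) \<and> snd (w ! k) \<noteq> snd (w ! Suc k)))"

definition finv :: "fword \<Rightarrow> fword" where
  "finv w = rev (map (\<lambda>(i, b). (i, \<not> b)) w)"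

definition fgen :: "nat \<Rightarrow> fword" where
  "fgen i = [(i, False)]"

definition Fn :: "nat \<Rightarrow> fword set" where
  "Fn n = {w. reduced w \<and> (\<forall>(i, b) \<in> set w. 1 \<le> i \<and> i \<le> n)}"

definition subst :: "(nat \<Rightarrow> fword) \<Rightarrow> fword \<Rightarrow> fword" where
  "subst f w = concat (map (\<lambda>(i, b). if b then finv (f i) else f i) w)"

definition endo :: "nat \<Rightarrow> (nat \<Rightarrow> fword) \<Rightarrow> fword \<Rightarrow> fword" where
  "endo n f = restrict (\<lambda>w. reduce (subst f w)) (Fn n)"

text \<open>Aut(F_n) sits inside the symmetric group on the carrier of F_n.\<close>
abbreviation SymF :: "nat \<Rightarrow> (fword \<Rightarrow> fword) monoid" where
  "SymF n \<equiv> BijGroup (Fn n)"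

definition sigma_map :: "nat \<Rightarrow> nat \<Rightarrow> fword" where
  "sigma_map i l = (if l = i then fgen i @ fgen (Suc i) @ finv (fgen i)
                    else if l = Suc i then fgen i else fgen l)"

definition alpha_map :: "nat \<Rightarrow> nat \<Rightarrow> fword" where
  "alpha_map i l = (if l = i then fgen (Suc i) else if l = Suc i then fgen i else fgen l)"

definition eps_map :: "nat \<Rightarrow> nat \<Rightarrow> nat \<Rightarrow> fword" where
  "eps_map i j l = (if l = i then finv (fgen j) @ fgen i @ fgen j else fgen l)"

definition sigma_aut :: "nat \<Rightarrow> nat \<Rightarrow> fword \<Rightarrow> fword" where
  "sigma_aut n i = endo n (sigma_map i)"

definition alpha_aut :: "nat \<Rightarrow> nat \<Rightarrow> fword \<Rightarrow> fword" where
  "alpha_aut n i = endo n (alpha_map i)"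

definition eps_aut :: "nat \<Rightarrow> nat \<Rightarrow> nat \<Rightarrow> fword \<Rightarrow> fword" where
  "eps_aut n i j = endo n (eps_map i j)"

definition Cb :: "nat \<Rightarrow> (fword \<Rightarrow> fword) set" where
  "Cb n = generate (SymF n) {eps_aut n i j | i j. 1 \<le> i \<and> i \<le> n \<and> 1 \<le> j \<and> j \<le> n \<and> i \<noteq> j}"

definition D :: "nat \<Rightarrow> nat \<Rightarrow> (fword \<Rightarrow> fword) set" where
  "D n i = generate (SymF n)
     ({eps_aut n (Suc i) k | k. 1 \<le> k \<and> k \<le> i} \<union> {eps_aut n k (Suc i) | k. 1 \<le> k \<and> k \<le> i})"

datatype vgen = Sig nat | Rho nat

(* (g, False) is the generator g, (g, True) is g^{-1} *)
type_synonym vword = "(vgen \<times> bool) list"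

definition vinv :: "vword \<Rightarrow> vword" where
  "vinv w = rev (map (\<lambda>(g, b). (g, \<not> b)) w)"

fun gidx :: "vgen \<Rightarrow> nat" where
  "gidx (Sig i) = i" | "gidx (Rho i) = i"

definition vword_ok :: "nat \<Rightarrow> vword \<Rightarrow> bool" where
  "vword_ok n w \<longleftrightarrow> (\<forall>(g, b) \<in> set w. 1 \<le> gidx g \<and> gidx g \<le> n - 1)"

text \<open>The homomorphism VB_n \<rightarrow> S_n, sigma_i, rho_i \<mapsto> (i, i+1).\<close>
definition transp :: "nat \<Rightarrow> nat \<Rightarrow> nat" where
  "transp i k = (if k = i then Suc i else if k = Suc i then i else k)"

definition vperm :: "vword \<Rightarrow> nat \<Rightarrow> nat" where
  "vperm w = foldr (\<lambda>(g, b) p. transp (gidx g) \<circ> p) w id"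

definition VP_words :: "nat \<Rightarrow> vword set" where
  "VP_words n = {w. vword_ok n w \<and> vperm w = id}"

fun phi_gen :: "nat \<Rightarrow> vgen \<Rightarrow> fword \<Rightarrow> fword" where
  "phi_gen n (Sig i) = sigma_aut n i"
| "phi_gen n (Rho i) = alpha_aut n i"

definition phi :: "nat \<Rightarrow> vword \<Rightarrow> fword \<Rightarrow> fword" where
  "phi n w = foldr (\<lambda>(g, b) acc.
       (if b then inv\<^bsub>SymF n\<^esub> (phi_gen n g) else phi_gen n g) \<otimes>\<^bsub>SymF n\<^esub> acc)
     w \<one>\<^bsub>SymF n\<^esub>"

definition rhos :: "nat \<Rightarrow> nat \<Rightarrow> vword" where
  "rhos k l = map (\<lambda>m. (Rho m, False)) [Suc k..<l]"

definition lam :: "nat \<Rightarrow> nat \<Rightarrow> vword" where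
  "lam i j = (if i < j then rev (rhos i j) @ [(Rho i, False), (Sig i, True)] @ rhos i j
              else rev (rhos j i) @ [(Sig j, True), (Rho j, False)] @ rhos j i)"

inductive_set H_words :: "nat \<Rightarrow> vword set" for i :: nat where
  H_nil: "[] \<in> H_words i"
| H_gen: "\<lbrakk>1 \<le> k; k \<le> Suc i; 1 \<le> l; l \<le> Suc i; k \<noteq> l; u \<in> H_words i\<rbrakk>
          \<Longrightarrow> lam k l @ u \<in> H_words i"
| H_gen_inv: "\<lbrakk>1 \<le> k; k \<le> Suc i; 1 \<le> l; l \<le> Suc i; k \<noteq> l; u \<in> H_words i\<rbrakk>
          \<Longrightarrow> vinv (lam k l) @ u \<in> H_words i"

definition V_gens :: "nat \<Rightarrow> vword set" where
  "V_gens i = {lam k (Suc i) | k. 1 \<le> k \<and> k \<le> i} \<union> {lam (Suc i) k | k. 1 \<le> k \<and> k \<le> i}"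

text \<open>Words representing elements of V_i^*, the normal closure of V_i in H_i:
  products of conjugates h v^{\<plusminus>1} h^{-1}, h \<in> H_i, v a generator of V_i.\<close>
inductive_set Vstar_words :: "nat \<Rightarrow> vword set" for i :: nat where
  Vs_nil: "[] \<in> Vstar_words i"
| Vs_conj: "\<lbrakk>v \<in> V_gens i; h \<in> H_words i; u \<in> Vstar_words i\<rbrakk>
          \<Longrightarrow> (h @ v @ vinv h) @ u \<in> Vstar_words i"
| Vs_conj_inv: "\<lbrakk>v \<in> V_gens i; h \<in> H_words i; u \<in> Vstar_words i\<rbrakk>
          \<Longrightarrow> (h @ vinv v @ vinv h) @ u \<in> Vstar_words i"

end

(*
  Write perm_aut n p for the automorphism x_l \<mapsto> x_(p l). Then alpha_t = perm_aut n (transp t),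
  sigma_t = eps_{t+1,t}^-1 alpha_t, and alpha_t eps_kl alpha_t = eps_{transp t k, transp t l}, so
  alpha_t normalises Cb_n. Induction on a word w gives phi(w) = c perm_aut n (vperm w) with c in Cb_n,
  whence phi(VP_n) is contained in Cb_n; conversely phi(lambda_kl) = eps_lk, so every generator of
  Cb_n is hit.

  For V_i^*, phi maps the generators of V_i onto those of D_i and maps H_i into the group generated
  by the eps_kl with k, l \<le> i+1. McCool-type conjugation relations among the eps_kl, checked by
  evaluating both sides on the generators of F_n, show that this group normalises D_i. Hence the
  image of a product of H_i-conjugates of generators of V_i lies in D_i, and every element of D_i
  arises this way.
*)

theory Submission
  imports Defs
begin

lemma (in group) conj_generate_closed:
  assumes a: "a \<in> carrier G" and S: "S \<subseteq> carrier G"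
    and gens: "\<And>s. s \<in> S \<Longrightarrow> a \<otimes> s \<otimes> inv a \<in> generate G S"
    and x: "x \<in> generate G S"
  shows "a \<otimes> x \<otimes> inv a \<in> generate G S"
proof -
  let ?c = "\<lambda>x. a \<otimes> x \<otimes> inv a"
  have "group_hom G G ?c"
    using a by unfold_locales (auto simp: hom_def m_assoc simp flip: m_assoc[of "inv a" a])
  then have "?c ` generate G S = generate G (?c ` S)"
    using S by (simp add: group_hom.generate_img)
  also have "\<dots> \<subseteq> generate G S"
    using gens by (intro generate_subgroup_incl generate_is_subgroup S) auto
  finally show ?thesis using x by blast
qed

lemma (in group) generate_subset_closed:
  assumes "\<one> \<in> A" "\<And>s. s \<in> S \<Longrightarrow> s \<in> A \<and> inv s \<in> A"
    and "\<And>x y. x \<in> A \<Longrightarrow> y \<in> A \<Longrightarrow> x \<otimes> y \<in> A"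
  shows "generate G S \<subseteq> A"
proof
  fix x
  show "x \<in> generate G S \<Longrightarrow> x \<in> A"
    by (induct x rule: generate.induct) (use assms in auto)
qed

lemma (in group) conj_commuting:
  assumes "x \<in> carrier G" "y \<in> carrier G" "x \<otimes> y = y \<otimes> x"
  shows "x \<otimes> y \<otimes> inv x = y" "inv x \<otimes> y \<otimes> x = y"
  using assms by (metis inv_closed m_assoc r_inv r_one, metis inv_closed m_assoc l_inv l_one)

section \<open>Reduced words\<close>

abbreviation inverse_letters :: "fletter \<Rightarrow> fletter \<Rightarrow> bool" where
  "inverse_letters x y \<equiv> fst x = fst y \<and> snd x \<noteq> snd y"

fun push :: "fletter \<Rightarrow> fword \<Rightarrow> fword" where
  "push x [] = [x]"
| "push x (y # w) = (if inverse_letters x y then w else x # y # w)"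

lemma reduce_Cons: "reduce (x # w) = push x (reduce w)"
  by (simp split: list.split)

declare reduce.simps(2)[simp del]

lemma reduce_single[simp]: "reduce [x] = [x]"
  by (simp add: reduce_Cons)

lemma reduce_append: "reduce (u @ w) = foldr push u (reduce w)"
  by (induct u) (simp_all add: reduce_Cons)

lemma reduced_Nil[simp]: "reduced []"
  and reduced_single[simp]: "reduced [x]"
  by (auto simp: reduced_def)

lemma reduced_Cons_Cons[simp]:
  "reduced (x # y # w) \<longleftrightarrow> \<not> inverse_letters x y \<and> reduced (y # w)"
  unfolding reduced_def by (auto simp: All_less_Suc2 nth_Cons split: nat.split)

lemma reduced_tl: "reduced (x # w) \<Longrightarrow> reduced w"
  by (cases w) auto

lemma reduced_push: "reduced w \<Longrightarrow> reduced (push x w)"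
  by (cases w) (auto dest: reduced_tl)

lemma reduced_reduce[simp]: "reduced (reduce w)"
  by (induct w) (simp_all add: reduce_Cons reduced_push)

lemma reduce_reduced: "reduced w \<Longrightarrow> reduce w = w"
proof (induct w)
  case (Cons x w)
  then have "reduce w = w" by (auto dest: reduced_tl)
  with Cons.prems show ?case by (cases w) (auto simp: reduce_Cons)
qed simp

lemma reduce_reduce[simp]: "reduce (reduce w) = reduce w"
  by (simp add: reduce_reduced)

lemma push_push_inverse:
  assumes "reduced w" "inverse_letters x y"
  shows "push x (push y w) = w"
proof (cases w)
  case (Cons z w')
  show ?thesis
  proof (cases "inverse_letters y z")
    case True
    with assms(2) have "z = x" by (cases x, cases z) auto
    with True Cons assms show ?thesis by (cases w') auto
  qed (use Cons assms(2) in auto)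
qed (use assms(2) in auto)

lemma reduced_foldr_push: "reduced w \<Longrightarrow> reduced (foldr push u w)"
  by (induct u) (auto simp: reduced_push)

lemma foldr_push_push: "reduced w \<Longrightarrow> foldr push (push x u) w = push x (foldr push u w)"
proof (cases u)
  case (Cons y u')
  assume w: "reduced w"
  show ?thesis
  proof (cases "inverse_letters x y")
    case True
    then have "push x (push y (foldr push u' w)) = foldr push u' w"
      by (intro push_push_inverse reduced_foldr_push w)
    with True Cons show ?thesis by simp
  qed (use Cons in auto)
qed simp

lemma foldr_push_reduce: "reduced w \<Longrightarrow> foldr push (reduce u) w = foldr push u w"
  by (induct u) (simp_all add: reduce_Cons foldr_push_push)

lemma reduce_append_reduce_left[simp]: "reduce (reduce u @ w) = reduce (u @ w)"
  by (simp add: reduce_append foldr_push_reduce)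

lemma reduce_append_reduce_right[simp]: "reduce (u @ reduce w) = reduce (u @ w)"
  by (simp add: reduce_append)

lemma finv_Nil[simp]: "finv [] = []"
  and finv_Cons[simp]: "finv (x # w) = finv w @ [(fst x, \<not> snd x)]"
  and finv_append[simp]: "finv (u @ v) = finv v @ finv u"
  by (auto simp: finv_def split: prod.split)

lemma finv_finv[simp]: "finv (finv w) = w"
  by (induct w) auto

lemma reduce_append_finv[simp]: "reduce (w @ finv w) = []"
proof (induct w)
  case (Cons x w)
  have "reduce ((x # w) @ finv (x # w)) = push x (reduce (reduce (w @ finv w) @ [(fst x, \<not> snd x)]))"
    by (simp only: finv_Cons append_Cons append_assoc reduce_Cons reduce_append_reduce_left)
  also have "\<dots> = []" using Cons by (simp add: reduce_Cons)
  finally show ?case .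
qed simp

lemma reduce_append_reduce_middle: "reduce (u @ reduce v @ w) = reduce (u @ v @ w)"
  by (metis reduce_append_reduce_left reduce_append_reduce_right)

lemma reduce_cancel_left[simp]: "reduce (w @ finv w @ u) = reduce u"
  by (metis append.left_neutral append_assoc reduce_append_reduce_left reduce_append_finv)

lemma reduce_cancel_left'[simp]: "reduce (finv w @ w @ u) = reduce u"
  using reduce_cancel_left[of "finv w"] by simp

lemma set_push: "set (push x w) \<subseteq> insert x (set w)"
  by (cases w) auto

lemma set_reduce: "set (reduce w) \<subseteq> set w"
  by (induct w) (use set_push in \<open>fastforce simp: reduce_Cons\<close>)+

lemma reduce_finv_cong:
  assumes "reduce u = reduce v"
  shows "reduce (finv u) = reduce (finv v)"
proof -
  have "reduce (finv u) = reduce (finv u @ reduce (v @ finv v))" by simp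
  also have "\<dots> = reduce (finv u @ reduce v @ finv v)"
    by (simp only: reduce_append_reduce_right reduce_append_reduce_middle)
  also have "\<dots> = reduce (finv u @ reduce u @ finv v)" by (simp only: assms)
  also have "\<dots> = reduce (finv v)" by (simp only: reduce_append_reduce_middle reduce_cancel_left')
  finally show ?thesis .
qed

section \<open>Endomorphisms of F_n given on the generators\<close>

definition letter_image :: "(nat \<Rightarrow> fword) \<Rightarrow> fletter \<Rightarrow> fword" where
  "letter_image f x = (if snd x then finv (f (fst x)) else f (fst x))"

lemma subst_Nil[simp]: "subst f [] = []"
  and subst_Cons[simp]: "subst f (x # w) = letter_image f x @ subst f w"
  and subst_append[simp]: "subst f (u @ v) = subst f u @ subst f v"
  by (auto simp: subst_def letter_image_def split: prod.split)

lemma letter_image_inverse: "letter_image f (fst x, \<not> snd x) = finv (letter_image f x)"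
  by (simp add: letter_image_def)

lemma subst_finv[simp]: "subst f (finv w) = finv (subst f w)"
  by (induct w) (simp_all add: letter_image_inverse)

lemma reduce_subst_push: "reduce (subst f (push x w)) = reduce (subst f (x # w))"
proof (cases w)
  case (Cons y w')
  show ?thesis
  proof (cases "inverse_letters x y")
    case True
    then have "y = (fst x, \<not> snd x)" by (cases x, cases y) auto
    with Cons have "subst f (x # w) = letter_image f x @ finv (letter_image f x) @ subst f w'"
      by (simp add: letter_image_inverse)
    with True Cons show ?thesis by simp
  qed (use Cons in auto)
qed simp

lemma reduce_subst_reduce[simp]: "reduce (subst f (reduce w)) = reduce (subst f w)"
proof (induct w)
  case (Cons x w)
  have "reduce (subst f (reduce (x # w))) = reduce (letter_image f x @ reduce (subst f (reduce w)))"
    by (simp add: reduce_Cons reduce_subst_push)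
  also have "\<dots> = reduce (subst f (x # w))" by (simp add: Cons)
  finally show ?case .
qed simp

lemma subst_subst: "subst f (subst g w) = subst (\<lambda>l. subst f (g l)) w"
  by (induct w) (auto simp: letter_image_def)

lemma subst_fgen[simp]: "subst fgen w = w"
  by (induct w) (auto simp: letter_image_def fgen_def)

lemma subst_fgen_single[simp]: "subst f (fgen i) = f i"
  by (simp add: fgen_def letter_image_def)

lemma reduce_subst_cong:
  assumes "\<And>x. x \<in> set w \<Longrightarrow> reduce (f (fst x)) = reduce (g (fst x))"
  shows "reduce (subst f w) = reduce (subst g w)"
  using assms
proof (induct w)
  case (Cons x w)
  have "reduce (letter_image f x) = reduce (letter_image g x)"
    using Cons.prems[of x] by (auto simp: letter_image_def intro: reduce_finv_cong)
  then have "reduce (reduce (letter_image f x) @ reduce (subst f w))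
           = reduce (reduce (letter_image g x) @ reduce (subst g w))"
    using Cons by simp
  then show ?case by simp
qed simp

definition on_gens :: "nat \<Rightarrow> fword \<Rightarrow> bool" where
  "on_gens n w \<longleftrightarrow> (\<forall>x \<in> set w. fst x \<in> {1..n})"

definition gens_map :: "nat \<Rightarrow> (nat \<Rightarrow> fword) \<Rightarrow> bool" where
  "gens_map n f \<longleftrightarrow> (\<forall>l \<in> {1..n}. on_gens n (f l))"

lemma on_gens_simps[simp]:
  "on_gens n []"
  "on_gens n (x # w) \<longleftrightarrow> fst x \<in> {1..n} \<and> on_gens n w"
  "on_gens n (u @ v) \<longleftrightarrow> on_gens n u \<and> on_gens n v"
  by (auto simp: on_gens_def)

lemma on_gens_finv[simp]: "on_gens n (finv w) \<longleftrightarrow> on_gens n w"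
  by (induct w) auto

lemma on_gens_fgen[simp]: "on_gens n (fgen i) \<longleftrightarrow> i \<in> {1..n}"
  by (simp add: fgen_def)

lemma on_gens_reduce: "on_gens n w \<Longrightarrow> on_gens n (reduce w)"
  using set_reduce by (fastforce simp: on_gens_def)

lemma on_gens_subst: "gens_map n f \<Longrightarrow> on_gens n w \<Longrightarrow> on_gens n (subst f w)"
  by (induct w) (auto simp: gens_map_def letter_image_def)

lemma Fn_iff: "w \<in> Fn n \<longleftrightarrow> reduced w \<and> on_gens n w"
  by (auto simp: Fn_def on_gens_def)

lemma endo_closed: "gens_map n f \<Longrightarrow> w \<in> Fn n \<Longrightarrow> endo n f w \<in> Fn n"
  by (auto simp: endo_def Fn_iff intro!: on_gens_reduce on_gens_subst)

definition subst_comp :: "(nat \<Rightarrow> fword) \<Rightarrow> (nat \<Rightarrow> fword) \<Rightarrow> nat \<Rightarrow> fword" where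
  "subst_comp f g = (\<lambda>l. subst f (g l))"

lemma gens_map_subst_comp: "gens_map n f \<Longrightarrow> gens_map n g \<Longrightarrow> gens_map n (subst_comp f g)"
  by (simp add: gens_map_def subst_comp_def on_gens_subst)

lemma compose_endo:
  assumes "gens_map n g"
  shows "compose (Fn n) (endo n f) (endo n g) = endo n (subst_comp f g)"
proof
  fix w
  show "compose (Fn n) (endo n f) (endo n g) w = endo n (subst_comp f g) w"
  proof (cases "w \<in> Fn n")
    case True
    with endo_closed[OF assms] have "endo n f (endo n g w) = reduce (subst f (reduce (subst g w)))"
      by (simp add: endo_def)
    also have "\<dots> = endo n (subst_comp f g) w"
      using True by (simp add: endo_def subst_subst subst_comp_def)
    finally show ?thesis using True by (simp add: compose_def)
  qed (simp add: compose_def endo_def)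
qed

lemma endo_cong:
  assumes "\<And>l. l \<in> {1..n} \<Longrightarrow> reduce (f l) = reduce (g l)"
  shows "endo n f = endo n g"
proof
  fix w
  show "endo n f w = endo n g w"
  proof (cases "w \<in> Fn n")
    case True
    then have "reduce (subst f w) = reduce (subst g w)"
      by (intro reduce_subst_cong assms) (auto simp: Fn_iff on_gens_def)
    with True show ?thesis by (simp add: endo_def)
  qed (simp add: endo_def)
qed

lemma endo_fgen: "endo n fgen = (\<lambda>w \<in> Fn n. w)"
  by (auto simp: endo_def Fn_iff reduce_reduced)

definition inverse_substs :: "nat \<Rightarrow> (nat \<Rightarrow> fword) \<Rightarrow> (nat \<Rightarrow> fword) \<Rightarrow> bool" where
  "inverse_substs n f g \<longleftrightarrow> gens_map n f \<and> gens_map n g \<and>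
     (\<forall>l \<in> {1..n}. reduce (subst f (g l)) = fgen l \<and> reduce (subst g (f l)) = fgen l)"

lemma inverse_substs_sym: "inverse_substs n f g \<Longrightarrow> inverse_substs n g f"
  by (auto simp: inverse_substs_def)

lemma compose_endo_inverse:
  assumes "inverse_substs n f g"
  shows "compose (Fn n) (endo n f) (endo n g) = (\<lambda>w \<in> Fn n. w)"
proof -
  have "endo n (subst_comp f g) = endo n fgen"
    using assms by (intro endo_cong) (simp add: inverse_substs_def subst_comp_def fgen_def)
  with assms show ?thesis by (simp add: inverse_substs_def compose_endo endo_fgen)
qed

lemma endo_Bij:
  assumes "inverse_substs n f g"
  shows "endo n f \<in> Bij (Fn n)"
proof -
  have maps: "gens_map n f" "gens_map n g" using assms by (auto simp: inverse_substs_def)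
  have "w \<in> Fn n \<Longrightarrow> endo n f (endo n g w) = w"
   and "w \<in> Fn n \<Longrightarrow> endo n g (endo n f w) = w" for w
    using fun_cong[OF compose_endo_inverse[OF assms], of w]
      fun_cong[OF compose_endo_inverse[OF inverse_substs_sym[OF assms]], of w]
    by (simp_all add: compose_def)
  then have "bij_betw (endo n f) (Fn n) (Fn n)"
    by (intro bij_betw_byWitness[where f'="endo n g"]) (use endo_closed maps in auto)
  then show ?thesis by (simp add: Bij_def endo_def)
qed

interpretation SymF: group "SymF n" for n
  by (rule group_BijGroup)

lemma SymF_carrier: "carrier (SymF n) = Bij (Fn n)"
  and SymF_one: "\<one>\<^bsub>SymF n\<^esub> = (\<lambda>w \<in> Fn n. w)"
  and SymF_mult: "x \<in> Bij (Fn n) \<Longrightarrow> y \<in> Bij (Fn n) \<Longrightarrow> x \<otimes>\<^bsub>SymF n\<^esub> y = compose (Fn n) x y"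
  by (simp_all add: BijGroup_def)

lemma endo_carrier: "inverse_substs n f g \<Longrightarrow> endo n f \<in> carrier (SymF n)"
  by (simp add: SymF_carrier endo_Bij)

lemma inv_endo:
  assumes "inverse_substs n f g"
  shows "inv\<^bsub>SymF n\<^esub> (endo n f) = endo n g"
proof (rule SymF.inv_equality)
  note sym = inverse_substs_sym[OF assms]
  show "endo n g \<otimes>\<^bsub>SymF n\<^esub> endo n f = \<one>\<^bsub>SymF n\<^esub>"
    using endo_Bij[OF sym] endo_Bij[OF assms] compose_endo_inverse[OF sym]
    by (simp add: SymF_mult SymF_one)
qed (use endo_carrier assms inverse_substs_sym in blast)+

lemma endo_mult:
  "gens_map n g \<Longrightarrow> endo n f \<in> carrier (SymF n) \<Longrightarrow> endo n g \<in> carrier (SymF n) \<Longrightarrow>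
   endo n f \<otimes>\<^bsub>SymF n\<^esub> endo n g = endo n (subst_comp f g)"
  by (simp add: SymF_mult compose_endo SymF_carrier)

lemma endo_mult_carrier:
  "gens_map n f \<Longrightarrow> gens_map n g \<Longrightarrow> endo n f \<in> carrier (SymF n) \<Longrightarrow> endo n g \<in> carrier (SymF n)
   \<Longrightarrow> endo n (subst_comp f g) \<in> carrier (SymF n)"
  by (metis endo_mult SymF.m_closed)

definition eps_inv_map :: "nat \<Rightarrow> nat \<Rightarrow> nat \<Rightarrow> fword" where
  "eps_inv_map i j l = (if l = i then fgen j @ fgen i @ finv (fgen j) else fgen l)"

definition eps_inv_aut :: "nat \<Rightarrow> nat \<Rightarrow> nat \<Rightarrow> fword \<Rightarrow> fword" where
  "eps_inv_aut n i j = endo n (eps_inv_map i j)"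

lemma gens_map_eps: "i \<in> {1..n} \<Longrightarrow> j \<in> {1..n} \<Longrightarrow> gens_map n (eps_map i j)"
  by (auto simp: gens_map_def eps_map_def)

lemma gens_map_eps_inv: "i \<in> {1..n} \<Longrightarrow> j \<in> {1..n} \<Longrightarrow> gens_map n (eps_inv_map i j)"
  by (auto simp: gens_map_def eps_inv_map_def)

lemma inverse_substs_eps:
  assumes "i \<in> {1..n}" "j \<in> {1..n}" "i \<noteq> j"
  shows "inverse_substs n (eps_map i j) (eps_inv_map i j)"
  using assms gens_map_eps[OF assms(1,2)] gens_map_eps_inv[OF assms(1,2)]
  by (auto simp: inverse_substs_def eps_map_def eps_inv_map_def fgen_def letter_image_def reduce_Cons)

context
  fixes n i j :: nat
  assumes ij: "i \<in> {1..n}" "j \<in> {1..n}" "i \<noteq> j"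
begin

lemma eps_aut_carrier: "eps_aut n i j \<in> carrier (SymF n)"
  unfolding eps_aut_def by (rule endo_carrier[OF inverse_substs_eps[OF ij]])

lemma eps_inv_aut_carrier: "eps_inv_aut n i j \<in> carrier (SymF n)"
  unfolding eps_inv_aut_def by (rule endo_carrier[OF inverse_substs_sym[OF inverse_substs_eps[OF ij]]])

lemma inv_eps_aut: "inv\<^bsub>SymF n\<^esub> (eps_aut n i j) = eps_inv_aut n i j"
  unfolding eps_aut_def eps_inv_aut_def by (rule inv_endo[OF inverse_substs_eps[OF ij]])

lemma inv_eps_inv_aut: "inv\<^bsub>SymF n\<^esub> (eps_inv_aut n i j) = eps_aut n i j"
  unfolding eps_aut_def eps_inv_aut_def
  by (rule inv_endo[OF inverse_substs_sym[OF inverse_substs_eps[OF ij]]])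

end

lemma transp_transp[simp]: "transp t (transp t i) = i"
  by (auto simp: transp_def)

lemma transp_in_range: "1 \<le> t \<Longrightarrow> Suc t \<le> n \<Longrightarrow> i \<in> {1..n} \<Longrightarrow> transp t i \<in> {1..n}"
  by (auto simp: transp_def)

lemma alpha_map_transp: "alpha_map t = (\<lambda>l. fgen (transp t l))"
  by (auto simp: alpha_map_def transp_def)

context
  fixes n t :: nat
  assumes t: "1 \<le> t" "Suc t \<le> n"
begin

lemma gens_map_alpha: "gens_map n (alpha_map t)"
  using t by (auto simp: gens_map_def alpha_map_def)

lemma inverse_substs_alpha: "inverse_substs n (alpha_map t) (alpha_map t)"
  using t gens_map_alpha by (auto simp: inverse_substs_def alpha_map_def fgen_def letter_image_def)

lemma alpha_aut_carrier: "alpha_aut n t \<in> carrier (SymF n)"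
  unfolding alpha_aut_def by (rule endo_carrier[OF inverse_substs_alpha])

lemma inv_alpha_aut: "inv\<^bsub>SymF n\<^esub> (alpha_aut n t) = alpha_aut n t"
  unfolding alpha_aut_def by (rule inv_endo[OF inverse_substs_alpha])

lemma alpha_aut_square: "alpha_aut n t \<otimes>\<^bsub>SymF n\<^esub> alpha_aut n t = \<one>\<^bsub>SymF n\<^esub>"
  by (metis SymF.r_inv alpha_aut_carrier inv_alpha_aut)

lemma sigma_aut_eq: "sigma_aut n t = eps_inv_aut n (Suc t) t \<otimes>\<^bsub>SymF n\<^esub> alpha_aut n t"
proof -
  have range: "t \<in> {1..n}" "Suc t \<in> {1..n}" using t by auto
  have "eps_inv_aut n (Suc t) t \<otimes>\<^bsub>SymF n\<^esub> alpha_aut n t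
      = endo n (subst_comp (eps_inv_map (Suc t) t) (alpha_map t))"
    using eps_inv_aut_carrier[OF range(2,1)] alpha_aut_carrier
    by (simp add: eps_inv_aut_def alpha_aut_def endo_mult gens_map_alpha)
  also have "\<dots> = sigma_aut n t" unfolding sigma_aut_def
    by (rule endo_cong)
      (auto simp: subst_comp_def alpha_map_def sigma_map_def eps_inv_map_def fgen_def letter_image_def)
  finally show ?thesis by simp
qed

lemma sigma_aut_carrier: "sigma_aut n t \<in> carrier (SymF n)"
  using t by (simp add: sigma_aut_eq alpha_aut_carrier eps_inv_aut_carrier)

lemma inv_sigma_aut: "inv\<^bsub>SymF n\<^esub> (sigma_aut n t) = alpha_aut n t \<otimes>\<^bsub>SymF n\<^esub> eps_aut n (Suc t) t"
  using t by (simp add: sigma_aut_eq SymF.inv_mult_group eps_inv_aut_carrier alpha_aut_carrier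
      inv_alpha_aut inv_eps_inv_aut)

lemma alpha_conj_eps_aut:
  assumes ab: "a \<in> {1..n}" "b \<in> {1..n}" "a \<noteq> b"
  shows "alpha_aut n t \<otimes>\<^bsub>SymF n\<^esub> eps_aut n a b \<otimes>\<^bsub>SymF n\<^esub> alpha_aut n t
       = eps_aut n (transp t a) (transp t b)"
proof -
  have "alpha_aut n t \<otimes>\<^bsub>SymF n\<^esub> eps_aut n a b = endo n (subst_comp (alpha_map t) (eps_map a b))"
    using endo_mult[OF gens_map_eps[OF ab(1,2)]] alpha_aut_carrier eps_aut_carrier[OF ab]
    by (simp add: alpha_aut_def eps_aut_def)
  moreover from this have "endo n (subst_comp (alpha_map t) (eps_map a b)) \<in> carrier (SymF n)"
    by (metis SymF.m_closed alpha_aut_carrier eps_aut_carrier[OF ab])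
  ultimately have "alpha_aut n t \<otimes>\<^bsub>SymF n\<^esub> eps_aut n a b \<otimes>\<^bsub>SymF n\<^esub> alpha_aut n t
     = endo n (subst_comp (subst_comp (alpha_map t) (eps_map a b)) (alpha_map t))"
    using alpha_aut_carrier by (simp add: alpha_aut_def endo_mult gens_map_alpha)
  also have "\<dots> = eps_aut n (transp t a) (transp t b)" unfolding eps_aut_def
  proof (rule endo_cong)
    fix l
    have "transp t l = a \<longleftrightarrow> l = transp t a" by auto
    then show "reduce (subst_comp (subst_comp (alpha_map t) (eps_map a b)) (alpha_map t) l)
             = reduce (eps_map (transp t a) (transp t b) l)"
      by (simp add: subst_comp_def alpha_map_transp eps_map_def letter_image_def)
  qed
  finally show ?thesis .
qed

end

definition perm_aut :: "nat \<Rightarrow> (nat \<Rightarrow> nat) \<Rightarrow> fword \<Rightarrow> fword" where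
  "perm_aut n p = endo n (\<lambda>l. fgen (p l))"

lemma perm_aut_id: "perm_aut n id = \<one>\<^bsub>SymF n\<^esub>"
  by (simp add: perm_aut_def SymF_one flip: endo_fgen)

lemma alpha_aut_mult_perm_aut:
  assumes t: "1 \<le> t" "Suc t \<le> n" and p: "p ` {1..n} \<subseteq> {1..n}"
    and carrier: "perm_aut n p \<in> carrier (SymF n)"
  shows "alpha_aut n t \<otimes>\<^bsub>SymF n\<^esub> perm_aut n p = perm_aut n (transp t \<circ> p)"
proof -
  have "gens_map n (\<lambda>l. fgen (p l))" using p by (auto simp: gens_map_def)
  with alpha_aut_carrier[OF t] carrier show ?thesis
    by (simp add: perm_aut_def alpha_aut_def endo_mult subst_comp_def alpha_map_transp)
qed

definition phi_letter :: "nat \<Rightarrow> vgen \<times> bool \<Rightarrow> fword \<Rightarrow> fword" where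
  "phi_letter n x = (if snd x then inv\<^bsub>SymF n\<^esub> (phi_gen n (fst x)) else phi_gen n (fst x))"

lemma phi_Nil[simp]: "phi n [] = \<one>\<^bsub>SymF n\<^esub>"
  and phi_Cons: "phi n (x # w) = phi_letter n x \<otimes>\<^bsub>SymF n\<^esub> phi n w"
  by (auto simp: phi_def phi_letter_def split: prod.split)

definition vgen_ok :: "nat \<Rightarrow> vgen \<Rightarrow> bool" where
  "vgen_ok n g \<longleftrightarrow> 1 \<le> gidx g \<and> Suc (gidx g) \<le> n"

lemma vword_ok_Nil[simp]: "vword_ok n []"
  and vword_ok_Cons[simp]: "vword_ok n (x # w) \<longleftrightarrow> vgen_ok n (fst x) \<and> vword_ok n w"
  and vword_ok_append[simp]: "vword_ok n (u @ v) \<longleftrightarrow> vword_ok n u \<and> vword_ok n v"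
  by (auto simp: vword_ok_def vgen_ok_def split: prod.split)

lemma vinv_Nil[simp]: "vinv [] = []"
  and vinv_Cons[simp]: "vinv (x # w) = vinv w @ [(fst x, \<not> snd x)]"
  and vinv_append[simp]: "vinv (u @ v) = vinv v @ vinv u"
  by (auto simp: vinv_def split: prod.split)

lemma vword_ok_vinv[simp]: "vword_ok n (vinv w) \<longleftrightarrow> vword_ok n w"
  by (induct w) auto

lemma phi_gen_carrier: "vgen_ok n g \<Longrightarrow> phi_gen n g \<in> carrier (SymF n)"
  by (cases g) (auto simp: vgen_ok_def sigma_aut_carrier alpha_aut_carrier)

lemma phi_letter_carrier: "vgen_ok n (fst x) \<Longrightarrow> phi_letter n x \<in> carrier (SymF n)"
  by (auto simp: phi_letter_def phi_gen_carrier)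

lemma phi_carrier: "vword_ok n w \<Longrightarrow> phi n w \<in> carrier (SymF n)"
  by (induct w) (auto simp: phi_Cons phi_letter_carrier)

lemma phi_append:
  "vword_ok n u \<Longrightarrow> vword_ok n v \<Longrightarrow> phi n (u @ v) = phi n u \<otimes>\<^bsub>SymF n\<^esub> phi n v"
  by (induct u) (auto simp: phi_Cons phi_letter_carrier phi_carrier SymF.m_assoc)

lemma phi_single: "vgen_ok n (fst x) \<Longrightarrow> phi n [x] = phi_letter n x"
  by (simp add: phi_Cons phi_letter_carrier)

lemma phi_vinv: "vword_ok n w \<Longrightarrow> phi n (vinv w) = inv\<^bsub>SymF n\<^esub> (phi n w)"
proof (induct w)
  case (Cons x w)
  then have ok: "vgen_ok n (fst x)" "vword_ok n w" by auto
  then have "phi n [(fst x, \<not> snd x)] = inv\<^bsub>SymF n\<^esub> (phi_letter n x)"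
    using phi_gen_carrier by (auto simp: phi_single phi_letter_def)
  with Cons ok show ?case
    by (simp add: phi_append phi_Cons SymF.inv_mult_group phi_letter_carrier phi_carrier)
qed simp

lemma vperm_Nil[simp]: "vperm [] = id"
  and vperm_Cons: "vperm (x # w) = transp (gidx (fst x)) \<circ> vperm w"
  by (auto simp: vperm_def split: prod.split)

lemma vperm_append: "vperm (u @ v) = vperm u \<circ> vperm v"
  by (induct u) (auto simp: vperm_Cons)

lemma vperm_vinv: "vperm (vinv w) \<circ> vperm w = id"
proof (induct w)
  case (Cons x w)
  have "transp (gidx (fst x)) \<circ> transp (gidx (fst x)) = id" by auto
  with Cons show ?case by (simp add: vperm_append vperm_Cons comp_assoc)
qed simp

section \<open>The image of VP_n\<close>

definition eps_gens :: "nat \<Rightarrow> (fword \<Rightarrow> fword) set" where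
  "eps_gens n = {eps_aut n i j | i j. i \<in> {1..n} \<and> j \<in> {1..n} \<and> i \<noteq> j}"

lemma Cb_eq: "Cb n = generate (SymF n) (eps_gens n)"
  by (simp add: Cb_def eps_gens_def)

lemma eps_gens_carrier: "eps_gens n \<subseteq> carrier (SymF n)"
  by (auto simp: eps_gens_def eps_aut_carrier)

lemma Cb_subgroup: "subgroup (Cb n) (SymF n)"
  unfolding Cb_eq by (rule SymF.generate_is_subgroup[OF eps_gens_carrier])

lemma eps_aut_in_Cb: "i \<in> {1..n} \<Longrightarrow> j \<in> {1..n} \<Longrightarrow> i \<noteq> j \<Longrightarrow> eps_aut n i j \<in> Cb n"
  unfolding Cb_eq by (rule generate.incl) (auto simp: eps_gens_def)

lemma eps_inv_aut_in_Cb: "i \<in> {1..n} \<Longrightarrow> j \<in> {1..n} \<Longrightarrow> i \<noteq> j \<Longrightarrow> eps_inv_aut n i j \<in> Cb n"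
  by (metis Cb_subgroup eps_aut_in_Cb inv_eps_aut subgroup.m_inv_closed)

lemma alpha_conj_Cb:
  assumes t: "1 \<le> t" "Suc t \<le> n" and c: "c \<in> Cb n"
  shows "alpha_aut n t \<otimes>\<^bsub>SymF n\<^esub> c \<otimes>\<^bsub>SymF n\<^esub> alpha_aut n t \<in> Cb n"
proof -
  have "alpha_aut n t \<otimes>\<^bsub>SymF n\<^esub> c \<otimes>\<^bsub>SymF n\<^esub> inv\<^bsub>SymF n\<^esub> (alpha_aut n t) \<in> Cb n"
    unfolding Cb_eq
  proof (rule SymF.conj_generate_closed[OF alpha_aut_carrier[OF t] eps_gens_carrier])
    fix s assume "s \<in> eps_gens n"
    then obtain i j where s: "s = eps_aut n i j" "i \<in> {1..n}" "j \<in> {1..n}" "i \<noteq> j"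
      by (auto simp: eps_gens_def)
    then have "alpha_aut n t \<otimes>\<^bsub>SymF n\<^esub> s \<otimes>\<^bsub>SymF n\<^esub> inv\<^bsub>SymF n\<^esub> (alpha_aut n t)
             = eps_aut n (transp t i) (transp t j)"
      using t by (simp add: inv_alpha_aut alpha_conj_eps_aut)
    also have "\<dots> \<in> Cb n"
      using s t by (intro eps_aut_in_Cb transp_in_range) (auto dest: arg_cong[of _ _ "transp t"])
    finally show "alpha_aut n t \<otimes>\<^bsub>SymF n\<^esub> s \<otimes>\<^bsub>SymF n\<^esub> inv\<^bsub>SymF n\<^esub> (alpha_aut n t)
                  \<in> generate (SymF n) (eps_gens n)"
      by (simp add: Cb_eq)
  qed (use c in \<open>simp add: Cb_eq\<close>)
  then show ?thesis using t by (simp add: inv_alpha_aut)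
qed

lemma phi_letter_mult_Cb:
  assumes x: "vgen_ok n (fst x)" and c: "c \<in> Cb n"
  shows "phi_letter n x \<otimes>\<^bsub>SymF n\<^esub> c \<otimes>\<^bsub>SymF n\<^esub> alpha_aut n (gidx (fst x)) \<in> Cb n"
proof -
  obtain g b where gb: "x = (g, b)" by (cases x)
  define t where "t = gidx g"
  have t: "1 \<le> t" "Suc t \<le> n" and range: "t \<in> {1..n}" "Suc t \<in> {1..n}"
    using x by (auto simp: gb t_def vgen_ok_def)
  note carriers = alpha_aut_carrier[OF t] subgroup.mem_carrier[OF Cb_subgroup c]
    eps_aut_carrier[OF range(2,1)] eps_inv_aut_carrier[OF range(2,1)]
  note closed = subgroup.m_closed[OF Cb_subgroup]
  show ?thesis
  proof (cases g)
    case Rho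
    then show ?thesis
      using alpha_conj_Cb[OF t c] t by (cases b) (simp_all add: gb t_def phi_letter_def inv_alpha_aut)
  next
    case Sig
    show ?thesis
    proof (cases b)
      case False
      then have "phi_letter n x \<otimes>\<^bsub>SymF n\<^esub> c \<otimes>\<^bsub>SymF n\<^esub> alpha_aut n t
          = eps_inv_aut n (Suc t) t \<otimes>\<^bsub>SymF n\<^esub> (alpha_aut n t \<otimes>\<^bsub>SymF n\<^esub> c \<otimes>\<^bsub>SymF n\<^esub> alpha_aut n t)"
        using Sig t carriers by (simp add: gb t_def phi_letter_def sigma_aut_eq SymF.m_assoc)
      then show ?thesis
        using closed[OF eps_inv_aut_in_Cb[OF range(2,1)] alpha_conj_Cb[OF t c]] by (simp add: gb t_def)
    next
      case True
      then have "phi_letter n x \<otimes>\<^bsub>SymF n\<^esub> c \<otimes>\<^bsub>SymF n\<^esub> alpha_aut n t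
          = alpha_aut n t \<otimes>\<^bsub>SymF n\<^esub> (eps_aut n (Suc t) t \<otimes>\<^bsub>SymF n\<^esub> c) \<otimes>\<^bsub>SymF n\<^esub> alpha_aut n t"
        using Sig t carriers by (simp add: gb t_def phi_letter_def inv_sigma_aut SymF.m_assoc)
      then show ?thesis
        using alpha_conj_Cb[OF t closed[OF eps_aut_in_Cb[OF range(2,1)] c]] by (simp add: gb t_def)
    qed
  qed
qed

lemma vperm_range: "vword_ok n w \<Longrightarrow> vperm w ` {1..n} \<subseteq> {1..n}"
  by (induct w) (fastforce simp: vperm_Cons vgen_ok_def transp_def)+

lemma perm_aut_vperm_Cons:
  assumes "vword_ok n (x # w)" "perm_aut n (vperm w) \<in> carrier (SymF n)"
  shows "perm_aut n (vperm (x # w)) = alpha_aut n (gidx (fst x)) \<otimes>\<^bsub>SymF n\<^esub> perm_aut n (vperm w)"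
  using assms alpha_aut_mult_perm_aut[OF _ _ vperm_range] by (simp add: vperm_Cons vgen_ok_def)

lemma perm_aut_vperm_carrier: "vword_ok n w \<Longrightarrow> perm_aut n (vperm w) \<in> carrier (SymF n)"
proof (induct w)
  case (Cons x w)
  then have "perm_aut n (vperm w) \<in> carrier (SymF n)" by simp
  with Cons.prems show ?case
    by (simp add: perm_aut_vperm_Cons[OF Cons.prems] vgen_ok_def alpha_aut_carrier)
qed (simp add: perm_aut_id)

lemma phi_decomp_Cb_perm_aut:
  assumes "vword_ok n w"
  shows "\<exists>c \<in> Cb n. phi n w = c \<otimes>\<^bsub>SymF n\<^esub> perm_aut n (vperm w)"
  using assms
proof (induct w)
  case Nil
  have "phi n [] = \<one>\<^bsub>SymF n\<^esub> \<otimes>\<^bsub>SymF n\<^esub> perm_aut n (vperm [])"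
    by (simp only: phi_Nil vperm_Nil perm_aut_id SymF.l_one SymF.one_closed)
  then show ?case using subgroup.one_closed[OF Cb_subgroup] by blast
next
  case (Cons x w)
  then have ok: "vgen_ok n (fst x)" "vword_ok n w" by auto
  with Cons.hyps obtain c where c: "c \<in> Cb n" "phi n w = c \<otimes>\<^bsub>SymF n\<^esub> perm_aut n (vperm w)"
    by blast
  let ?a = "alpha_aut n (gidx (fst x))"
  have a: "?a \<in> carrier (SymF n)" "?a \<otimes>\<^bsub>SymF n\<^esub> ?a = \<one>\<^bsub>SymF n\<^esub>"
    using ok(1) by (auto simp: vgen_ok_def alpha_aut_carrier alpha_aut_square)
  note carriers = a(1) phi_letter_carrier[OF ok(1)] subgroup.mem_carrier[OF Cb_subgroup c(1)]
    perm_aut_vperm_carrier[OF ok(2)]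
  have "phi n (x # w) = phi_letter n x \<otimes>\<^bsub>SymF n\<^esub> c \<otimes>\<^bsub>SymF n\<^esub> (?a \<otimes>\<^bsub>SymF n\<^esub> ?a)
      \<otimes>\<^bsub>SymF n\<^esub> perm_aut n (vperm w)"
    using carriers by (simp add: phi_Cons c(2) a(2) SymF.m_assoc)
  also have "\<dots> = (phi_letter n x \<otimes>\<^bsub>SymF n\<^esub> c \<otimes>\<^bsub>SymF n\<^esub> ?a) \<otimes>\<^bsub>SymF n\<^esub> perm_aut n (vperm (x # w))"
    using carriers by (simp add: perm_aut_vperm_Cons[OF Cons.prems] SymF.m_assoc)
  finally show ?case using phi_letter_mult_Cb[OF ok(1) c(1)] by blast
qed

lemma phi_VP_words_subset: "phi n ` VP_words n \<subseteq> Cb n"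
proof
  fix y assume "y \<in> phi n ` VP_words n"
  then obtain w where w: "vword_ok n w" "vperm w = id" "y = phi n w"
    by (auto simp: VP_words_def)
  with phi_decomp_Cb_perm_aut[OF w(1)] show "y \<in> Cb n"
    using subgroup.mem_carrier[OF Cb_subgroup] by (auto simp: perm_aut_id)
qed

lemma lam_Suc_right: "k < l \<Longrightarrow> lam k (Suc l) = (Rho l, False) # lam k l @ [(Rho l, False)]"
  and lam_Suc_left: "k < l \<Longrightarrow> lam (Suc l) k = (Rho l, False) # lam l k @ [(Rho l, False)]"
  by (simp_all add: lam_def rhos_def)

lemma lam_Suc_self: "lam k (Suc k) = [(Rho k, False), (Sig k, True)]"
  and lam_self_Suc: "lam (Suc k) k = [(Sig k, True), (Rho k, False)]"
  by (simp_all add: lam_def rhos_def)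

lemma phi_rho_conj:
  assumes "1 \<le> l" "Suc l \<le> n" "vword_ok n u"
  shows "phi n ((Rho l, False) # u @ [(Rho l, False)])
       = alpha_aut n l \<otimes>\<^bsub>SymF n\<^esub> phi n u \<otimes>\<^bsub>SymF n\<^esub> alpha_aut n l"
  using assms
  by (simp add: phi_Cons phi_append phi_single vgen_ok_def phi_letter_def alpha_aut_carrier phi_carrier
      SymF.m_assoc)

lemma lam_adjacent_VP_words_phi:
  assumes t: "1 \<le> k" "Suc k \<le> n"
  shows "lam k (Suc k) \<in> VP_words n \<and> phi n (lam k (Suc k)) = eps_aut n (Suc k) k
       \<and> lam (Suc k) k \<in> VP_words n \<and> phi n (lam (Suc k) k) = eps_aut n k (Suc k)"
proof -
  have range: "k \<in> {1..n}" "Suc k \<in> {1..n}" using t by auto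
  note carriers = alpha_aut_carrier[OF t] eps_aut_carrier[OF range(2,1)]
  have "phi n (lam k (Suc k)) = (alpha_aut n k \<otimes>\<^bsub>SymF n\<^esub> alpha_aut n k) \<otimes>\<^bsub>SymF n\<^esub> eps_aut n (Suc k) k"
    using t carriers by (simp add: lam_Suc_self phi_Cons phi_letter_def inv_sigma_aut SymF.m_assoc)
  moreover have "phi n (lam (Suc k) k)
      = alpha_aut n k \<otimes>\<^bsub>SymF n\<^esub> eps_aut n (Suc k) k \<otimes>\<^bsub>SymF n\<^esub> alpha_aut n k"
    using t carriers by (simp add: lam_self_Suc phi_Cons phi_letter_def inv_sigma_aut SymF.m_assoc)
  ultimately show ?thesis
    using t range carriers alpha_conj_eps_aut[OF t range(2,1)]
    by (auto simp: alpha_aut_square VP_words_def lam_Suc_self lam_self_Suc vperm_Cons vgen_ok_def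
        transp_def)
qed

lemma lam_VP_words_phi_less:
  assumes "1 \<le> k" "k < l" "l \<le> n"
  shows "lam k l \<in> VP_words n \<and> phi n (lam k l) = eps_aut n l k
       \<and> lam l k \<in> VP_words n \<and> phi n (lam l k) = eps_aut n k l"
proof -
  have "Suc k \<le> l" using assms by simp
  then show ?thesis using assms(3)
  proof (induct l rule: dec_induct)
    case base
    then show ?case using assms lam_adjacent_VP_words_phi by simp
  next
    case (step l)
    then have t: "1 \<le> l" "Suc l \<le> n" and kl: "k < l" and range: "k \<in> {1..n}" "l \<in> {1..n}"
      using assms by auto
    have transp_kl: "transp l k = k" "transp l l = Suc l" using kl by (auto simp: transp_def)
    from step t have IH: "lam k l \<in> VP_words n" "phi n (lam k l) = eps_aut n l k"
      "lam l k \<in> VP_words n" "phi n (lam l k) = eps_aut n k l" by auto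
    have ok: "vword_ok n (lam k l)" "vword_ok n (lam l k)" using IH by (simp_all add: VP_words_def)
    have "phi n (lam k (Suc l)) = alpha_aut n l \<otimes>\<^bsub>SymF n\<^esub> eps_aut n l k \<otimes>\<^bsub>SymF n\<^esub> alpha_aut n l"
      by (simp add: lam_Suc_right[OF kl] phi_rho_conj[OF t ok(1)] IH)
    moreover have "phi n (lam (Suc l) k) = alpha_aut n l \<otimes>\<^bsub>SymF n\<^esub> eps_aut n k l \<otimes>\<^bsub>SymF n\<^esub> alpha_aut n l"
      by (simp add: lam_Suc_left[OF kl] phi_rho_conj[OF t ok(2)] IH)
    ultimately have "phi n (lam k (Suc l)) = eps_aut n (Suc l) k" "phi n (lam (Suc l) k) = eps_aut n k (Suc l)"
      using kl alpha_conj_eps_aut[OF t range(2,1)] alpha_conj_eps_aut[OF t range] by (simp_all add: transp_kl)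
    moreover have "lam k (Suc l) \<in> VP_words n" "lam (Suc l) k \<in> VP_words n"
      using IH t by (auto simp: lam_Suc_right lam_Suc_left kl VP_words_def vperm_append vperm_Cons
          vgen_ok_def)
    ultimately show ?case by blast
  qed
qed

lemma lam_in_VP_words_phi:
  assumes "a \<in> {1..n}" "b \<in> {1..n}" "a \<noteq> b"
  shows "lam a b \<in> VP_words n \<and> phi n (lam a b) = eps_aut n b a"
  using assms lam_VP_words_phi_less[of a b n] lam_VP_words_phi_less[of b a n] by (cases "a < b") auto

lemma VP_words_append: "u \<in> VP_words n \<Longrightarrow> v \<in> VP_words n \<Longrightarrow> u @ v \<in> VP_words n"
  and VP_words_vinv: "u \<in> VP_words n \<Longrightarrow> vinv u \<in> VP_words n"
  using vperm_vinv[of u] by (auto simp: VP_words_def vperm_append)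

lemma phi_VP_words: "phi n ` VP_words n = Cb n"
proof
  show "Cb n \<subseteq> phi n ` VP_words n"
    unfolding Cb_eq
  proof (rule SymF.generate_subset_closed)
    show "\<one>\<^bsub>SymF n\<^esub> \<in> phi n ` VP_words n"
      by (rule image_eqI[where x = "[]"]) (simp_all add: VP_words_def)
  next
    fix s assume "s \<in> eps_gens n"
    then obtain a b where s: "s = eps_aut n a b" "a \<in> {1..n}" "b \<in> {1..n}" "a \<noteq> b"
      by (auto simp: eps_gens_def)
    then have "lam b a \<in> VP_words n" "phi n (lam b a) = s"
      using lam_in_VP_words_phi[of b n a] by auto
    moreover have "phi n (vinv (lam b a)) = inv\<^bsub>SymF n\<^esub> s"
      using calculation by (simp add: phi_vinv VP_words_def)
    ultimately show "s \<in> phi n ` VP_words n \<and> inv\<^bsub>SymF n\<^esub> s \<in> phi n ` VP_words n"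
      by (metis VP_words_vinv image_eqI)
  next
    fix x y assume "x \<in> phi n ` VP_words n" "y \<in> phi n ` VP_words n"
    then obtain u v where "u \<in> VP_words n" "v \<in> VP_words n" "x = phi n u" "y = phi n v"
      by blast
    then show "x \<otimes>\<^bsub>SymF n\<^esub> y \<in> phi n ` VP_words n"
      by (intro image_eqI[where x = "u @ v"] VP_words_append) (auto simp: VP_words_def phi_append)
  qed
qed (rule phi_VP_words_subset)

section \<open>The image of V_i^*\<close>

lemmas eps_product_simps = endo_mult endo_mult_carrier gens_map_subst_comp gens_map_eps
  gens_map_eps_inv eps_aut_carrier[unfolded eps_aut_def] eps_inv_aut_carrier[unfolded eps_inv_aut_def]

(* b = d is allowed *)
lemma eps_aut_commute:
  assumes "a \<in> {1..n}" "b \<in> {1..n}" "c \<in> {1..n}" "d \<in> {1..n}"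
    and "a \<noteq> b" "c \<noteq> d" "a \<noteq> c" "a \<noteq> d" "b \<noteq> c"
  shows "eps_aut n a b \<otimes>\<^bsub>SymF n\<^esub> eps_aut n c d = eps_aut n c d \<otimes>\<^bsub>SymF n\<^esub> eps_aut n a b"
  unfolding eps_aut_def using assms assms(5-9)[symmetric]
  by (simp only: eps_product_simps not_False_eq_True)
    (rule endo_cong, simp add: subst_comp_def eps_map_def fgen_def letter_image_def reduce_Cons)

lemma eps_aut_conj_relations:
  assumes "a \<in> {1..n}" "b \<in> {1..n}" "m \<in> {1..n}" "a \<noteq> b" "a \<noteq> m" "b \<noteq> m"
  shows "eps_aut n a b \<otimes>\<^bsub>SymF n\<^esub> eps_aut n m a \<otimes>\<^bsub>SymF n\<^esub> eps_inv_aut n a b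
       = eps_inv_aut n m b \<otimes>\<^bsub>SymF n\<^esub> eps_aut n m a \<otimes>\<^bsub>SymF n\<^esub> eps_aut n m b"
    and "eps_aut n a b \<otimes>\<^bsub>SymF n\<^esub> eps_aut n a m \<otimes>\<^bsub>SymF n\<^esub> eps_inv_aut n a b
       = eps_inv_aut n m b \<otimes>\<^bsub>SymF n\<^esub> eps_aut n a m \<otimes>\<^bsub>SymF n\<^esub> eps_aut n m b"
    and "eps_aut n a b \<otimes>\<^bsub>SymF n\<^esub> eps_aut n b m \<otimes>\<^bsub>SymF n\<^esub> eps_inv_aut n a b
       = eps_aut n a m \<otimes>\<^bsub>SymF n\<^esub> eps_aut n b m \<otimes>\<^bsub>SymF n\<^esub> eps_inv_aut n m b
         \<otimes>\<^bsub>SymF n\<^esub> eps_inv_aut n a m \<otimes>\<^bsub>SymF n\<^esub> eps_aut n m b"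
    and "eps_inv_aut n a b \<otimes>\<^bsub>SymF n\<^esub> eps_aut n m a \<otimes>\<^bsub>SymF n\<^esub> eps_aut n a b
       = eps_aut n m b \<otimes>\<^bsub>SymF n\<^esub> eps_aut n m a \<otimes>\<^bsub>SymF n\<^esub> eps_inv_aut n m b"
    and "eps_inv_aut n a b \<otimes>\<^bsub>SymF n\<^esub> eps_aut n a m \<otimes>\<^bsub>SymF n\<^esub> eps_aut n a b
       = eps_aut n m b \<otimes>\<^bsub>SymF n\<^esub> eps_aut n a m \<otimes>\<^bsub>SymF n\<^esub> eps_inv_aut n m b"
    and "eps_inv_aut n a b \<otimes>\<^bsub>SymF n\<^esub> eps_aut n b m \<otimes>\<^bsub>SymF n\<^esub> eps_aut n a b
       = eps_aut n a m \<otimes>\<^bsub>SymF n\<^esub> eps_aut n b m \<otimes>\<^bsub>SymF n\<^esub> eps_aut n m b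
         \<otimes>\<^bsub>SymF n\<^esub> eps_inv_aut n a m \<otimes>\<^bsub>SymF n\<^esub> eps_inv_aut n m b"
  unfolding eps_aut_def eps_inv_aut_def using assms assms(4-6)[symmetric]
  by (simp_all only: eps_product_simps not_False_eq_True)
    (rule endo_cong, simp add: subst_comp_def eps_map_def eps_inv_map_def fgen_def letter_image_def
      reduce_Cons)+

definition D_gens :: "nat \<Rightarrow> nat \<Rightarrow> (fword \<Rightarrow> fword) set" where
  "D_gens n i = {eps_aut n (Suc i) k | k. 1 \<le> k \<and> k \<le> i} \<union> {eps_aut n k (Suc i) | k. 1 \<le> k \<and> k \<le> i}"

lemma D_eq: "D n i = generate (SymF n) (D_gens n i)"
  by (simp add: D_def D_gens_def)

definition H_gens :: "nat \<Rightarrow> nat \<Rightarrow> (fword \<Rightarrow> fword) set" where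
  "H_gens n i = {eps_aut n a b | a b. a \<in> {1..Suc i} \<and> b \<in> {1..Suc i} \<and> a \<noteq> b}"

context
  fixes n i :: nat
  assumes i: "1 \<le> i" "Suc i \<le> n"
begin

lemma D_gens_carrier: "D_gens n i \<subseteq> carrier (SymF n)"
  using i by (auto simp: D_gens_def intro!: eps_aut_carrier)

lemma D_subgroup: "subgroup (D n i) (SymF n)"
  unfolding D_eq by (rule SymF.generate_is_subgroup[OF D_gens_carrier])

lemma eps_aut_in_D:
  "k \<in> {1..i} \<Longrightarrow> eps_aut n (Suc i) k \<in> D n i"
  "k \<in> {1..i} \<Longrightarrow> eps_aut n k (Suc i) \<in> D n i"
  unfolding D_eq by (auto simp: D_gens_def intro: generate.incl)

lemma eps_inv_aut_in_D:
  "k \<in> {1..i} \<Longrightarrow> eps_inv_aut n (Suc i) k \<in> D n i"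
  "k \<in> {1..i} \<Longrightarrow> eps_inv_aut n k (Suc i) \<in> D n i"
  using i eps_aut_in_D subgroup.m_inv_closed[OF D_subgroup] by (auto simp flip: inv_eps_aut)

lemmas D_intros = subgroup.m_closed[OF D_subgroup] eps_aut_in_D eps_inv_aut_in_D

lemma eps_conj_D_gens:
  assumes ab: "a \<in> {1..Suc i}" "b \<in> {1..Suc i}" "a \<noteq> b" and s: "s \<in> D_gens n i"
  shows "eps_aut n a b \<otimes>\<^bsub>SymF n\<^esub> s \<otimes>\<^bsub>SymF n\<^esub> eps_inv_aut n a b \<in> D n i
       \<and> eps_inv_aut n a b \<otimes>\<^bsub>SymF n\<^esub> s \<otimes>\<^bsub>SymF n\<^esub> eps_aut n a b \<in> D n i"
proof (cases "a = Suc i \<or> b = Suc i")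
  case True
  have "s \<in> D n i" using s unfolding D_eq by (rule generate.incl)
  with True ab show ?thesis by (auto intro!: D_intros)
next
  case False
  let ?m = "Suc i"
  have range: "a \<in> {1..n}" "b \<in> {1..n}" "?m \<in> {1..n}" and ab': "a \<in> {1..i}" "b \<in> {1..i}"
    using ab False i by auto
  obtain k where k: "k \<in> {1..i}" "s = eps_aut n ?m k \<or> s = eps_aut n k ?m"
    using s by (auto simp: D_gens_def)
  note relations = eps_aut_conj_relations[OF range ab(3)]
  have commuting: "eps_aut n a b \<otimes>\<^bsub>SymF n\<^esub> s \<otimes>\<^bsub>SymF n\<^esub> eps_inv_aut n a b = s
      \<and> eps_inv_aut n a b \<otimes>\<^bsub>SymF n\<^esub> s \<otimes>\<^bsub>SymF n\<^esub> eps_aut n a b = s"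
    if "s = eps_aut n ?m b \<or> k \<noteq> a \<and> k \<noteq> b"
  proof -
    have "eps_aut n a b \<otimes>\<^bsub>SymF n\<^esub> s = s \<otimes>\<^bsub>SymF n\<^esub> eps_aut n a b"
      using that k range ab' ab(3) by (auto intro!: eps_aut_commute)
    with SymF.conj_commuting[OF eps_aut_carrier[OF range(1,2) ab(3)]] show ?thesis
      using s D_gens_carrier by (auto simp: inv_eps_aut[OF range(1,2) ab(3)])
  qed
  show ?thesis
  proof (cases "s = eps_aut n ?m b \<or> k \<noteq> a \<and> k \<noteq> b")
    case True
    have "s \<in> D n i" using k by (auto intro: eps_aut_in_D)
    with True commuting show ?thesis by simp
  next
    case False
    with k have "s = eps_aut n ?m a \<or> s = eps_aut n a ?m \<or> s = eps_aut n b ?m" by auto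
    then show ?thesis using ab' by (elim disjE) (auto simp: relations intro!: D_intros)
  qed
qed

lemma eps_conj_D:
  assumes ab: "a \<in> {1..Suc i}" "b \<in> {1..Suc i}" "a \<noteq> b"
    and c: "c \<in> {eps_aut n a b, eps_inv_aut n a b}" and d: "d \<in> D n i"
  shows "c \<otimes>\<^bsub>SymF n\<^esub> d \<otimes>\<^bsub>SymF n\<^esub> inv\<^bsub>SymF n\<^esub> c \<in> D n i"
proof -
  have range: "a \<in> {1..n}" "b \<in> {1..n}" using ab i by auto
  note invs = inv_eps_aut[OF range ab(3)] inv_eps_inv_aut[OF range ab(3)]
  have "c \<otimes>\<^bsub>SymF n\<^esub> d \<otimes>\<^bsub>SymF n\<^esub> inv\<^bsub>SymF n\<^esub> c \<in> generate (SymF n) (D_gens n i)"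
  proof (rule SymF.conj_generate_closed[OF _ D_gens_carrier])
    show "c \<in> carrier (SymF n)"
      using c eps_aut_carrier[OF range ab(3)] eps_inv_aut_carrier[OF range ab(3)] by auto
    show "d \<in> generate (SymF n) (D_gens n i)" using d by (simp add: D_eq)
    fix t assume "t \<in> D_gens n i"
    with c have "c \<otimes>\<^bsub>SymF n\<^esub> t \<otimes>\<^bsub>SymF n\<^esub> inv\<^bsub>SymF n\<^esub> c \<in> D n i"
      using eps_conj_D_gens[OF ab] invs by auto
    then show "c \<otimes>\<^bsub>SymF n\<^esub> t \<otimes>\<^bsub>SymF n\<^esub> inv\<^bsub>SymF n\<^esub> c \<in> generate (SymF n) (D_gens n i)"
      by (simp add: D_eq)
  qed
  then show ?thesis by (simp add: D_eq)
qed

lemma H_normalizes_D: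
  assumes h: "h \<in> generate (SymF n) (H_gens n i)" and d: "d \<in> D n i"
  shows "h \<otimes>\<^bsub>SymF n\<^esub> d \<otimes>\<^bsub>SymF n\<^esub> inv\<^bsub>SymF n\<^esub> h \<in> D n i"
proof -
  let ?N = "{h \<in> carrier (SymF n). \<forall>d \<in> D n i. h \<otimes>\<^bsub>SymF n\<^esub> d \<otimes>\<^bsub>SymF n\<^esub> inv\<^bsub>SymF n\<^esub> h \<in> D n i}"
  note D_carrier = subgroup.mem_carrier[OF D_subgroup]
  have "generate (SymF n) (H_gens n i) \<subseteq> ?N"
  proof (rule SymF.generate_subset_closed)
    show "\<one>\<^bsub>SymF n\<^esub> \<in> ?N" by (simp add: D_carrier)
  next
    fix s assume "s \<in> H_gens n i"
    then obtain a b where s: "s = eps_aut n a b" and ab: "a \<in> {1..Suc i}" "b \<in> {1..Suc i}" "a \<noteq> b"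
      by (auto simp: H_gens_def)
    then have range: "a \<in> {1..n}" "b \<in> {1..n}" using i by auto
    have "eps_aut n a b \<in> ?N" "eps_inv_aut n a b \<in> ?N"
      using eps_conj_D[OF ab] eps_aut_carrier[OF range ab(3)] eps_inv_aut_carrier[OF range ab(3)]
      by blast+
    then show "s \<in> ?N \<and> inv\<^bsub>SymF n\<^esub> s \<in> ?N"
      by (simp add: s inv_eps_aut[OF range ab(3)])
  next
    fix x y assume x: "x \<in> ?N" and y: "y \<in> ?N"
    have "x \<otimes>\<^bsub>SymF n\<^esub> y \<otimes>\<^bsub>SymF n\<^esub> d \<otimes>\<^bsub>SymF n\<^esub> inv\<^bsub>SymF n\<^esub> (x \<otimes>\<^bsub>SymF n\<^esub> y)
        = x \<otimes>\<^bsub>SymF n\<^esub> (y \<otimes>\<^bsub>SymF n\<^esub> d \<otimes>\<^bsub>SymF n\<^esub> inv\<^bsub>SymF n\<^esub> y) \<otimes>\<^bsub>SymF n\<^esub> inv\<^bsub>SymF n\<^esub> x"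
      if "d \<in> D n i" for d
      using x y D_carrier[OF that] by (simp add: SymF.m_assoc SymF.inv_mult_group)
    with x y show "x \<otimes>\<^bsub>SymF n\<^esub> y \<in> ?N" by auto
  qed
  with h d show ?thesis by blast
qed

lemma phi_H_words: "h \<in> H_words i \<Longrightarrow> vword_ok n h \<and> phi n h \<in> generate (SymF n) (H_gens n i)"
proof (induct h rule: H_words.induct)
  case H_nil
  then show ?case by (simp add: generate.one)
next
  case (H_gen k l u)
  then have "lam k l \<in> VP_words n" "phi n (lam k l) \<in> H_gens n i"
    using i lam_in_VP_words_phi[of k n l] by (auto simp: H_gens_def)
  with H_gen show ?case by (auto simp: VP_words_def phi_append intro: generate.incl generate.eng)
next
  case (H_gen_inv k l u)
  then have "lam k l \<in> VP_words n" "phi n (lam k l) \<in> H_gens n i"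
    using i lam_in_VP_words_phi[of k n l] by (auto simp: H_gens_def)
  with H_gen_inv show ?case
    by (auto simp: VP_words_def phi_append phi_vinv intro: generate.inv generate.eng)
qed

lemma V_gens_vword_ok: "v \<in> V_gens i \<Longrightarrow> vword_ok n v"
  using i lam_in_VP_words_phi[of _ n] by (auto simp: V_gens_def VP_words_def)

lemma phi_V_gens: "phi n ` V_gens i = D_gens n i"
proof -
  have phi_lam: "phi n (lam k (Suc i)) = eps_aut n (Suc i) k" "phi n (lam (Suc i) k) = eps_aut n k (Suc i)"
    if "k \<in> {1..i}" for k
    using i that lam_in_VP_words_phi[of k n "Suc i"] lam_in_VP_words_phi[of "Suc i" n k] by auto
  have V: "V_gens i = (\<lambda>k. lam k (Suc i)) ` {1..i} \<union> (\<lambda>k. lam (Suc i) k) ` {1..i}"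
    and D: "D_gens n i = (\<lambda>k. eps_aut n (Suc i) k) ` {1..i} \<union> (\<lambda>k. eps_aut n k (Suc i)) ` {1..i}"
    by (auto simp: V_gens_def D_gens_def)
  show ?thesis
    unfolding V D image_Un image_image by (intro arg_cong2[where f = "(\<union>)"] image_cong) (simp_all add: phi_lam)
qed

lemma phi_conj_in_D:
  assumes "v \<in> V_gens i" "h \<in> H_words i" "b \<in> {v, vinv v}"
  shows "vword_ok n (h @ b @ vinv h) \<and> phi n (h @ b @ vinv h) \<in> D n i"
proof -
  have v: "vword_ok n v" "phi n v \<in> D n i"
    using assms(1) phi_V_gens V_gens_vword_ok unfolding D_eq by (auto intro: generate.incl)
  then have b: "vword_ok n b" "phi n b \<in> D n i"
    using assms(3) by (auto simp: phi_vinv subgroup.m_inv_closed[OF D_subgroup])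
  from phi_H_words[OF assms(2)] have h: "vword_ok n h" "phi n h \<in> generate (SymF n) (H_gens n i)"
    by auto
  have "phi n (h @ b @ vinv h) = phi n h \<otimes>\<^bsub>SymF n\<^esub> phi n b \<otimes>\<^bsub>SymF n\<^esub> inv\<^bsub>SymF n\<^esub> (phi n h)"
    using b h by (simp add: phi_append phi_vinv phi_carrier SymF.m_assoc)
  with b h H_normalizes_D show ?thesis by simp
qed

lemma phi_Vstar_words_subset: "w \<in> Vstar_words i \<Longrightarrow> vword_ok n w \<and> phi n w \<in> D n i"
proof (induct w rule: Vstar_words.induct)
  case Vs_nil
  then show ?case by (simp add: D_eq generate.one)
next
  case (Vs_conj v h u)
  then have "vword_ok n (h @ v @ vinv h)" "phi n (h @ v @ vinv h) \<in> D n i"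
    using phi_conj_in_D[of v h v] by auto
  with Vs_conj show ?case
    using phi_append[of n "h @ v @ vinv h" u] subgroup.m_closed[OF D_subgroup] by auto
next
  case (Vs_conj_inv v h u)
  then have "vword_ok n (h @ vinv v @ vinv h)" "phi n (h @ vinv v @ vinv h) \<in> D n i"
    using phi_conj_in_D[of v h "vinv v"] by auto
  with Vs_conj_inv show ?case
    using phi_append[of n "h @ vinv v @ vinv h" u] subgroup.m_closed[OF D_subgroup] by auto
qed

end

lemma Vstar_words_append: "u \<in> Vstar_words i \<Longrightarrow> w \<in> Vstar_words i \<Longrightarrow> u @ w \<in> Vstar_words i"
proof (induct u rule: Vstar_words.induct)
  case (Vs_conj v h u)
  then show ?case using Vstar_words.Vs_conj[of v i h "u @ w"] by simp
next
  case (Vs_conj_inv v h u)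
  then show ?case using Vstar_words.Vs_conj_inv[of v i h "u @ w"] by simp
qed simp

lemma V_gens_in_Vstar_words:
  assumes "v \<in> V_gens i"
  shows "v \<in> Vstar_words i" "vinv v \<in> Vstar_words i"
  using Vs_conj[OF assms H_nil Vs_nil] Vs_conj_inv[OF assms H_nil Vs_nil] by simp_all

lemma phi_Vstar_words:
  assumes i: "1 \<le> i" "Suc i \<le> n"
  shows "phi n ` Vstar_words i = D n i"
proof
  show "phi n ` Vstar_words i \<subseteq> D n i" using phi_Vstar_words_subset[OF i] by auto
  show "D n i \<subseteq> phi n ` Vstar_words i"
    unfolding D_eq
  proof (rule SymF.generate_subset_closed)
    show "\<one>\<^bsub>SymF n\<^esub> \<in> phi n ` Vstar_words i"
      by (rule image_eqI[where x = "[]"]) (simp_all add: Vs_nil)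
  next
    fix s assume "s \<in> D_gens n i"
    then obtain v where v: "v \<in> V_gens i" "s = phi n v"
      using phi_V_gens[OF i] by blast
    then have "inv\<^bsub>SymF n\<^esub> s = phi n (vinv v)"
      by (simp add: phi_vinv V_gens_vword_ok[OF i])
    with v show "s \<in> phi n ` Vstar_words i \<and> inv\<^bsub>SymF n\<^esub> s \<in> phi n ` Vstar_words i"
      using V_gens_in_Vstar_words by blast
  next
    fix x y assume "x \<in> phi n ` Vstar_words i" "y \<in> phi n ` Vstar_words i"
    then obtain u w where "u \<in> Vstar_words i" "w \<in> Vstar_words i" "x = phi n u" "y = phi n w"
      by blast
    then show "x \<otimes>\<^bsub>SymF n\<^esub> y \<in> phi n ` Vstar_words i"
      using phi_Vstar_words_subset[OF i]
      by (intro image_eqI[where x = "u @ w"] Vstar_words_append) (auto simp: phi_append)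
  qed
qed

theorem corollary3:
  fixes n :: nat
  shows "phi n ` VP_words n = Cb n
         \<and> (\<forall>i. 1 \<le> i \<and> i \<le> n - 1 \<longrightarrow> phi n ` Vstar_words i = D n i)"
proof (intro conjI allI impI)
  show "phi n ` VP_words n = Cb n" by (rule phi_VP_words)
  fix i assume "1 \<le> i \<and> i \<le> n - 1"
  then show "phi n ` Vstar_words i = D n i" by (intro phi_Vstar_words) auto
qed

end
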